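(* Let $C$ be a linear code over $\mathbb{Z}_4+u\mathbb{Z}_4$ of length $n$, let $D$ be a non-zero linear code over $\mathbb{Z}_4$ and $E$ a non-zero linear code over $\mathbb{F}_2+u\mathbb{F}_2$ such that $\mu(C)=D$ and $\alpha(C)=E$. Let $d,d',d''$ denote the minimum Lee weights of $C$, $D$ and $E$ respectively. Then $d\le 2d'$ and $d\le 2d''$.
   Context: $\mathbb{Z}_4+u\mathbb{Z}_4$ is the commutative ring of characteristic $4$ with $u^2=0$; $\mathbb{F}_2+u\mathbb{F}_2$ is the commutative ring $\{0,1,u,1+u\}$ of characteristic $2$ with $u^2=0$. A linear code over a ring $R$ is an $R$-submodule of $R^n$. Lee weights: on $\mathbb{Z}_4$, $w_L(0)=0,w_L(1)=w_L(3)=1,w_L(2)=2$; on $\mathbb{Z}_4+u\mathbb{Z}_4$, $w_L(a+ub)=w_L(b)+w_L(a+b)$; on $\mathbb{F}_2+u\mathbb{F}_2$, $w_L(0)=0$, $w_L(1)=w_L(1+u)=1$, $w_L(u)=2$; all extended additively to vectors; minimum Lee weight is the minimum over nonzero codewords. For $\overline{a},\overline{b}\in\mathbb{Z}_4^n$, $\mu(\overline{a}+u\overline{b})=\overline{a}$; $\alpha$ is coordinatewise reduction modulo $2$ from $\mathbb{Z}_4+u\mathbb{Z}_4$ to $\mathbb{F}_2+u\mathbb{F}_2$. *)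

theory Defs
  imports Main "HOL-Library.Numeral_Type"
begin

text \<open>Z4 is the type 4 (integers mod 4), F2 is the type 2.
  An element a + u b of Z4 + uZ4 is the pair (a,b) :: 4 \<times> 4;
  an element a + u b of F2 + uF2 is the pair (a,b) :: 2 \<times> 2.
  Vectors of length n are functions from a finite index type 'n (with n = CARD('n)).\<close>

definition mult_ZU :: "4 \<times> 4 \<Rightarrow> 4 \<times> 4 \<Rightarrow> 4 \<times> 4" where
  "mult_ZU x y = (fst x * fst y, fst x * snd y + snd x * fst y)"

definition mult_FU :: "2 \<times> 2 \<Rightarrow> 2 \<times> 2 \<Rightarrow> 2 \<times> 2" where
  "mult_FU x y = (fst x * fst y, fst x * snd y + snd x * fst y)"

definition add_pair :: "'a::plus \<times> 'a \<Rightarrow> 'a \<times> 'a \<Rightarrow> 'a \<times> 'a" where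
  "add_pair x y = (fst x + fst y, snd x + snd y)"

definition linear_code_Z4 :: "('n::finite \<Rightarrow> 4) set \<Rightarrow> bool" where
  "linear_code_Z4 C \<longleftrightarrow> (\<lambda>i. 0) \<in> C \<and> (\<forall>x\<in>C. \<forall>y\<in>C. (\<lambda>i. x i + y i) \<in> C)
     \<and> (\<forall>r x. x \<in> C \<longrightarrow> (\<lambda>i. r * x i) \<in> C)"

definition linear_code_ZU :: "('n::finite \<Rightarrow> 4 \<times> 4) set \<Rightarrow> bool" where
  "linear_code_ZU C \<longleftrightarrow> (\<lambda>i. (0,0)) \<in> C \<and> (\<forall>x\<in>C. \<forall>y\<in>C. (\<lambda>i. add_pair (x i) (y i)) \<in> C)
     \<and> (\<forall>r x. x \<in> C \<longrightarrow> (\<lambda>i. mult_ZU r (x i)) \<in> C)"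

definition linear_code_FU :: "('n::finite \<Rightarrow> 2 \<times> 2) set \<Rightarrow> bool" where
  "linear_code_FU C \<longleftrightarrow> (\<lambda>i. (0,0)) \<in> C \<and> (\<forall>x\<in>C. \<forall>y\<in>C. (\<lambda>i. add_pair (x i) (y i)) \<in> C)
     \<and> (\<forall>r x. x \<in> C \<longrightarrow> (\<lambda>i. mult_FU r (x i)) \<in> C)"

definition lee_Z4 :: "4 \<Rightarrow> nat" where
  "lee_Z4 x = (if x = 0 then 0 else if x = 2 then 2 else 1)"

definition lee_ZU :: "4 \<times> 4 \<Rightarrow> nat" where
  "lee_ZU x = lee_Z4 (snd x) + lee_Z4 (fst x + snd x)"

definition lee_FU :: "2 \<times> 2 \<Rightarrow> nat" where
  "lee_FU x = (if fst x = 0 then (if snd x = 0 then 0 else 2) else 1)"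

definition vec_weight :: "('a \<Rightarrow> nat) \<Rightarrow> ('n::finite \<Rightarrow> 'a) \<Rightarrow> nat" where
  "vec_weight w v = (\<Sum>i\<in>UNIV. w (v i))"

definition min_weight :: "('a \<Rightarrow> nat) \<Rightarrow> 'a \<Rightarrow> ('n::finite \<Rightarrow> 'a) set \<Rightarrow> nat" where
  "min_weight w z C = Min {vec_weight w v | v. v \<in> C \<and> v \<noteq> (\<lambda>i. z)}"

definition mu :: "('n \<Rightarrow> 4 \<times> 4) \<Rightarrow> ('n \<Rightarrow> 4)" where
  "mu v = (\<lambda>i. fst (v i))"

definition red2 :: "4 \<Rightarrow> 2" where
  "red2 x = (if x = 0 \<or> x = 2 then 0 else 1)"

definition alpha :: "('n \<Rightarrow> 4 \<times> 4) \<Rightarrow> ('n \<Rightarrow> 2 \<times> 2)" where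
  "alpha v = (\<lambda>i. (red2 (fst (v i)), red2 (snd (v i))))"

end

theory Submission
  imports Defs
begin

text \<open>Multiplication by \<open>u\<close> sends \<open>a + ub\<close> to \<open>ua\<close>, whose Lee weight is twice that of
  \<open>\<mu>(a + ub) = a\<close>; multiplication by \<open>2\<close> sends it to \<open>2a + u2b\<close>, whose Lee weight is twice that of
  \<open>\<alpha>(a + ub)\<close>. Both maps preserve \<open>C\<close>, and since Lee weights vanish only at zero, a
  minimum-weight word of \<open>D\<close> (resp. \<open>E\<close>) lifts to a nonzero word of \<open>C\<close> of twice its weight.\<close>

lemma num4_cases: "(x::4) = 0 \<or> x = 1 \<or> x = 2 \<or> x = 3"
proof (induct x)
  case (of_int z)
  then have "z = 0 \<or> z = 1 \<or> z = 2 \<or> z = 3" by auto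
  then show ?case by auto
qed

lemma lee_Z4_eq_0_iff [simp]: "lee_Z4 x = 0 \<longleftrightarrow> x = 0"
  by (simp add: lee_Z4_def)

lemma lee_ZU_eq_0_iff [simp]: "lee_ZU x = 0 \<longleftrightarrow> x = (0, 0)"
proof -
  obtain a b where "x = (a, b)" by (cases x)
  then show ?thesis by (auto simp: lee_ZU_def)
qed

lemma lee_FU_eq_0_iff [simp]: "lee_FU x = 0 \<longleftrightarrow> x = (0, 0)"
  by (simp add: lee_FU_def prod_eq_iff)

lemma lee_ZU_mult_u: "lee_ZU (mult_ZU (0, 1) x) = 2 * lee_Z4 (fst x)"
  by (simp add: lee_ZU_def mult_ZU_def)

lemma lee_ZU_mult_2: "lee_ZU (mult_ZU (2, 0) x) = 2 * lee_FU (red2 (fst x), red2 (snd x))"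
proof -
  obtain a b where x: "x = (a, b)" by (cases x)
  show ?thesis using num4_cases[of a] num4_cases[of b]
    by (elim disjE) (simp_all add: x lee_ZU_def mult_ZU_def lee_Z4_def lee_FU_def red2_def)
qed

lemma vec_weight_eq_0_iff:
  assumes "\<And>x. w x = 0 \<longleftrightarrow> x = z"
  shows "vec_weight w (v :: 'n::finite \<Rightarrow> 'a) = 0 \<longleftrightarrow> v = (\<lambda>i. z)"
  by (auto simp: vec_weight_def assms)

lemma vec_weight_comp_scaled:
  assumes "\<And>x. w (f x) = k * w' (g x)"
  shows "vec_weight w (\<lambda>i. f (v i)) = k * vec_weight w' (\<lambda>i::'n::finite. g (v i))"
  by (simp add: vec_weight_def assms sum_distrib_left)

lemma min_weight_le:
  fixes C :: "('n::finite \<Rightarrow> 'a::finite) set"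
  assumes "v \<in> C" "v \<noteq> (\<lambda>i. z)"
  shows "min_weight w z C \<le> vec_weight w v"
  unfolding min_weight_def by (rule Min_le) (use assms in auto)

lemma min_weight_attained:
  fixes C :: "('n::finite \<Rightarrow> 'a::finite) set"
  assumes "v \<in> C" "v \<noteq> (\<lambda>i. z)"
  obtains a where "a \<in> C" "a \<noteq> (\<lambda>i. z)" "min_weight w z C = vec_weight w a"
proof -
  have "min_weight w z C \<in> {vec_weight w v | v. v \<in> C \<and> v \<noteq> (\<lambda>i. z)}"
    unfolding min_weight_def by (rule Min_in) (use assms in auto)
  then show ?thesis using that by auto
qed

lemma min_weight_le_mult_image:
  fixes C :: "('n::finite \<Rightarrow> 'a::finite) set"
    and h :: "('n \<Rightarrow> 'a) \<Rightarrow> ('n \<Rightarrow> 'b::finite)"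
  assumes "v \<in> h ` C" "v \<noteq> (\<lambda>i. z')" "k > 0"
    and w_eq_0: "\<And>x. w x = 0 \<longleftrightarrow> x = z" and w'_eq_0: "\<And>y. w' y = 0 \<longleftrightarrow> y = z'"
    and s_mem: "\<And>c. c \<in> C \<Longrightarrow> s c \<in> C"
    and s_weight: "\<And>c. c \<in> C \<Longrightarrow> vec_weight w (s c) = k * vec_weight w' (h c)"
  shows "min_weight w z C \<le> k * min_weight w' z' (h ` C)"
proof -
  obtain a where a: "a \<in> h ` C" "a \<noteq> (\<lambda>i. z')" "min_weight w' z' (h ` C) = vec_weight w' a"
    using assms(1,2) by (rule min_weight_attained)
  then obtain c where c: "c \<in> C" "h c = a" by blast
  have "vec_weight w' a \<noteq> 0"
    using a(2) by (simp add: vec_weight_eq_0_iff[OF w'_eq_0])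
  then have "vec_weight w (s c) \<noteq> 0"
    using s_weight[OF c(1)] c(2) \<open>k > 0\<close> by simp
  then have "s c \<noteq> (\<lambda>i. z)"
    by (simp add: vec_weight_eq_0_iff[OF w_eq_0])
  then have "min_weight w z C \<le> vec_weight w (s c)"
    using s_mem[OF c(1)] by (intro min_weight_le)
  then show ?thesis
    using s_weight[OF c(1)] c(2) a(3) by simp
qed

theorem theorem4p6:
  fixes C :: "('n::finite \<Rightarrow> 4 \<times> 4) set"
    and D :: "('n \<Rightarrow> 4) set"
    and E :: "('n \<Rightarrow> 2 \<times> 2) set"
  assumes "linear_code_ZU C"
    and "linear_code_Z4 D" and "D \<noteq> {\<lambda>i. 0}"
    and "linear_code_FU E" and "E \<noteq> {\<lambda>i. (0,0)}"
    and "mu ` C = D" and "alpha ` C = E"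
  shows "min_weight lee_ZU (0,0) C \<le> 2 * min_weight lee_Z4 0 D
       \<and> min_weight lee_ZU (0,0) C \<le> 2 * min_weight lee_FU (0,0) E"
proof
  have scale_mem: "\<And>r c. c \<in> C \<Longrightarrow> (\<lambda>i. mult_ZU r (c i)) \<in> C"
    using assms(1) unfolding linear_code_ZU_def by blast
  obtain d where "d \<in> D" "d \<noteq> (\<lambda>i. 0)"
    using assms(2,3) unfolding linear_code_Z4_def by blast
  then show "min_weight lee_ZU (0,0) C \<le> 2 * min_weight lee_Z4 0 D"
    unfolding assms(6)[symmetric]
    by (rule min_weight_le_mult_image[where s = "\<lambda>c i. mult_ZU (0, 1) (c i)"])
      (auto simp: scale_mem mu_def lee_ZU_mult_u intro: vec_weight_comp_scaled)
  obtain e where "e \<in> E" "e \<noteq> (\<lambda>i. (0, 0))"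
    using assms(4,5) unfolding linear_code_FU_def by blast
  then show "min_weight lee_ZU (0,0) C \<le> 2 * min_weight lee_FU (0,0) E"
    unfolding assms(7)[symmetric]
    by (rule min_weight_le_mult_image[where s = "\<lambda>c i. mult_ZU (2, 0) (c i)"])
      (auto simp: scale_mem alpha_def lee_ZU_mult_2 intro: vec_weight_comp_scaled)
qed

end
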